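(* Let $L=\langle S,A,\to\rangle$ be a labelled transition system, $x,y\in\{o,b\}$, and $s,t\in S$ with $s\equiv^{ed}_{E(x,y)}t$. If there is an infinite sequence $s=s_0\xrightarrow{\tau}s_1\xrightarrow{\tau}s_2\xrightarrow{\tau}\cdots$, then there exist a state $t'$ with $t\twoheadrightarrow^+t'$ and an index $k$ such that $s_k\equiv^{ed}_{E(x,y)}t'$.
   Context: An LTS is $\langle S,A,\to\rangle$ with states $S$, actions $A$ containing the internal action $\tau$, and $\to\subseteq S\times A\times S$; write $s\xrightarrow{a}t$ and $\twoheadrightarrow^+$ for the transitive closure of $\xrightarrow{\tau}$. Game with explicit divergence. Let $\frown,\smile$ be formal tags and $E\subseteq\{\frown,\smile\}$. Spoiler-owned configurations $\langle (s,t),c,m,r\rangle_S$ and Duplicator-owned $\langle (s,t),c,m,r\rangle_D$ have $(s,t)\in S\times S$, $c\in (A\times S)\cup\{\dagger\}$, $m\in (S\times\{\frown,\smile\})\cup\{\dagger\}$, $r\in\{*,\checkmark\}$. From $\langle (s,t),c,m,r\rangle_S$ Spoiler may: (S1) move to $\langle (s,t),c,m,*\rangle_D$ if $c\neq\dagger$; (S2a) for some $s\xrightarrow{a}s'$, move to $\langle (s,t),(a,s'),(t,\frown),*\rangle_D$ if $c=\dagger$; (S2b) for some $s\xrightarrow{a}s'$, move to $\langle (s,t),(a,s'),(t,\frown),\checkmark\rangle_D$ if $c\neq (a,s')$; (S3) for some $t\xrightarrow{a}t'$, move to $\langle (t,s),(a,t'),(s,\frown),\checkmark\rangle_D$. From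 $\langle (u,v),(a,u'),(\bar v,f),r\rangle_D$ Duplicator may: (D1) move to $\langle (u',\bar v),\dagger,\dagger,*\rangle_S$ if $a=\tau$; (D2) if $f=\frown$ and $\bar v\xrightarrow{a}v'$: (a) move to $\langle (u',v'),(a,u'),(v',\smile),*\rangle_S$, or (b) move to $\langle (u',v'),\dagger,\dagger,\checkmark\rangle_S$, or (c) only if $\smile\in E$, move to $\langle (u,v),(a,u'),(v',\smile),*\rangle_S$; (D3) for some $\bar v\xrightarrow{\tau}v'$: (a) move to $\langle (u,v'),(a,u'),(v',f),*\rangle_S$, or (b) only if $f=\smile$, move to $\langle (u',v'),\dagger,\dagger,\checkmark\rangle_S$, or (c) only if $f\in E$, move to $\langle (u,v),(a,u'),(v',f),*\rangle_S$. Duplicator wins a finite play if Spoiler gets stuck, and an infinite play if it has infinitely many $\checkmark$ rewards; other plays are won by Spoiler. $s\equiv^{ed}_E t$ iff Duplicator has a strategy winning all plays from $\langle (s,t),\dagger,\dagger,*\rangle_S$. $E(x,y)$ is the smallest set with $\frown\in E(o,y)$ and $\smile\in E(x,o)$ for all $x,y\in\{o,b\}$. *)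

theory Defs
  imports Main
begin

datatype tag = Frown | Smile
datatype ob = Ob_o | Ob_b
datatype player = Spl | Dup

text \<open>Configurations: owner, pair of states, challenge c (None = dagger),
  memory m (None = dagger), reward r (True = checkmark, False = star).\<close>
datatype ('s, 'a) conf =
  Conf player "'s \<times> 's" "('a \<times> 's) option" "('s \<times> tag) option" bool

fun owner :: "('s, 'a) conf \<Rightarrow> player" where
  "owner (Conf p _ _ _ _) = p"

fun reward :: "('s, 'a) conf \<Rightarrow> bool" where
  "reward (Conf _ _ _ _ r) = r"

inductive ed_move :: "('s \<Rightarrow> 'a \<Rightarrow> 's \<Rightarrow> bool) \<Rightarrow> 'a \<Rightarrow> tag set
    \<Rightarrow> ('s, 'a) conf \<Rightarrow> ('s, 'a) conf \<Rightarrow> bool"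
  for tr :: "'s \<Rightarrow> 'a \<Rightarrow> 's \<Rightarrow> bool" and tau :: 'a and E :: "tag set" where
  S1: "c \<noteq> None \<Longrightarrow> ed_move tr tau E (Conf Spl (s,t) c m r) (Conf Dup (s,t) c m False)"
| S2a: "c = None \<Longrightarrow> tr s a s' \<Longrightarrow>
    ed_move tr tau E (Conf Spl (s,t) c m r) (Conf Dup (s,t) (Some (a,s')) (Some (t,Frown)) False)"
| S2b: "c \<noteq> Some (a,s') \<Longrightarrow> tr s a s' \<Longrightarrow>
    ed_move tr tau E (Conf Spl (s,t) c m r) (Conf Dup (s,t) (Some (a,s')) (Some (t,Frown)) True)"
| S3: "tr t a t' \<Longrightarrow>
    ed_move tr tau E (Conf Spl (s,t) c m r) (Conf Dup (t,s) (Some (a,t')) (Some (s,Frown)) True)"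
| D1: "a = tau \<Longrightarrow>
    ed_move tr tau E (Conf Dup (u,v) (Some (a,u')) (Some (vb,f)) r) (Conf Spl (u',vb) None None False)"
| D2a: "f = Frown \<Longrightarrow> tr vb a v' \<Longrightarrow>
    ed_move tr tau E (Conf Dup (u,v) (Some (a,u')) (Some (vb,f)) r)
      (Conf Spl (u',v') (Some (a,u')) (Some (v',Smile)) False)"
| D2b: "f = Frown \<Longrightarrow> tr vb a v' \<Longrightarrow>
    ed_move tr tau E (Conf Dup (u,v) (Some (a,u')) (Some (vb,f)) r) (Conf Spl (u',v') None None True)"
| D2c: "f = Frown \<Longrightarrow> tr vb a v' \<Longrightarrow> Smile \<in> E \<Longrightarrow>
    ed_move tr tau E (Conf Dup (u,v) (Some (a,u')) (Some (vb,f)) r)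
      (Conf Spl (u,v) (Some (a,u')) (Some (v',Smile)) False)"
| D3a: "tr vb tau v' \<Longrightarrow>
    ed_move tr tau E (Conf Dup (u,v) (Some (a,u')) (Some (vb,f)) r)
      (Conf Spl (u,v') (Some (a,u')) (Some (v',f)) False)"
| D3b: "tr vb tau v' \<Longrightarrow> f = Smile \<Longrightarrow>
    ed_move tr tau E (Conf Dup (u,v) (Some (a,u')) (Some (vb,f)) r) (Conf Spl (u',v') None None True)"
| D3c: "tr vb tau v' \<Longrightarrow> f \<in> E \<Longrightarrow>
    ed_move tr tau E (Conf Dup (u,v) (Some (a,u')) (Some (vb,f)) r)
      (Conf Spl (u,v) (Some (a,u')) (Some (v',f)) False)"

text \<open>Duplicator strategies are history dependent: they map a finite play
  (list of configurations, ending in the current one) to the next configuration.\<close>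
type_synonym ('s, 'a) dstrategy = "('s, 'a) conf list \<Rightarrow> ('s, 'a) conf"

definition fin_play :: "('s \<Rightarrow> 'a \<Rightarrow> 's \<Rightarrow> bool) \<Rightarrow> 'a \<Rightarrow> tag set \<Rightarrow> ('s, 'a) dstrategy
    \<Rightarrow> ('s, 'a) conf \<Rightarrow> ('s, 'a) conf list \<Rightarrow> bool" where
  "fin_play tr tau E \<sigma> c0 ps \<longleftrightarrow> ps \<noteq> [] \<and> ps ! 0 = c0 \<and>
     (\<forall>i. Suc i < length ps \<longrightarrow> ed_move tr tau E (ps ! i) (ps ! Suc i) \<and>
        (owner (ps ! i) = Dup \<longrightarrow> ps ! Suc i = \<sigma> (take (Suc i) ps)))"

definition inf_play :: "('s \<Rightarrow> 'a \<Rightarrow> 's \<Rightarrow> bool) \<Rightarrow> 'a \<Rightarrow> tag set \<Rightarrow> ('s, 'a) dstrategy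
    \<Rightarrow> ('s, 'a) conf \<Rightarrow> (nat \<Rightarrow> ('s, 'a) conf) \<Rightarrow> bool" where
  "inf_play tr tau E \<sigma> c0 p \<longleftrightarrow> p 0 = c0 \<and>
     (\<forall>i. ed_move tr tau E (p i) (p (Suc i)) \<and>
        (owner (p i) = Dup \<longrightarrow> p (Suc i) = \<sigma> (map p [0..<Suc i])))"

text \<open>sigma is winning for Duplicator from c0: along every consistent finite play ending
  in a Duplicator configuration, sigma proposes a legal move (so every maximal finite
  consistent play ends with Spoiler stuck), and every consistent infinite play has
  infinitely many checkmark rewards.\<close>
definition dup_wins :: "('s \<Rightarrow> 'a \<Rightarrow> 's \<Rightarrow> bool) \<Rightarrow> 'a \<Rightarrow> tag set \<Rightarrow> ('s, 'a) dstrategy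
    \<Rightarrow> ('s, 'a) conf \<Rightarrow> bool" where
  "dup_wins tr tau E \<sigma> c0 \<longleftrightarrow>
     (\<forall>ps. fin_play tr tau E \<sigma> c0 ps \<longrightarrow> owner (last ps) = Dup \<longrightarrow>
        ed_move tr tau E (last ps) (\<sigma> ps)) \<and>
     (\<forall>p. inf_play tr tau E \<sigma> c0 p \<longrightarrow> (\<exists>\<^sub>\<infinity>i. reward (p i)))"

definition ed_equiv :: "('s \<Rightarrow> 'a \<Rightarrow> 's \<Rightarrow> bool) \<Rightarrow> 'a \<Rightarrow> tag set \<Rightarrow> 's \<Rightarrow> 's \<Rightarrow> bool" where
  "ed_equiv tr tau E s t \<longleftrightarrow> (\<exists>\<sigma>. dup_wins tr tau E \<sigma> (Conf Spl (s,t) None None False))"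

definition Eset :: "ob \<Rightarrow> ob \<Rightarrow> tag set" where
  "Eset x y = {f. (f = Frown \<and> x = Ob_o) \<or> (f = Smile \<and> y = Ob_o)}"

definition tau_plus :: "('s \<Rightarrow> 'a \<Rightarrow> 's \<Rightarrow> bool) \<Rightarrow> 'a \<Rightarrow> 's \<Rightarrow> 's \<Rightarrow> bool" where
  "tau_plus tr tau = (\<lambda>u v. tr u tau v)\<^sup>+\<^sup>+"

end

theory Submission
  imports Defs "HOL-Library.Infinite_Set"
begin

text \<open>
  Let Spoiler chase the divergence: while no challenge is pending it challenges with the next
  \<open>\<tau>\<close>-step of \<open>s\<^sub>0 \<rightarrow> s\<^sub>1 \<rightarrow> \<dots>\<close>, and otherwise it just passes the turn. Against this
  Spoiler, Spoiler's state stays on the sequence, Duplicator's state stays \<open>\<tau>\<close>-reachable from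
  \<open>t\<close>, and a checkmark is only awarded after Duplicator has made a \<open>\<tau>\<close>-step, i.e.\ at a
  Spoiler configuration \<open>(s\<^sub>k, t')\<close> with \<open>t \<twoheadrightarrow>\<^sup>+ t'\<close>. A winning strategy earns infinitely many
  checkmarks, so such a configuration is reached, and the residual strategy from there shows
  \<open>s\<^sub>k \<equiv> t'\<close>. The argument works for every set \<open>E\<close>.
\<close>

lemma ed_move_Spl_reward_irrelevant:
  "ed_move tr tau E (Conf Spl st c m r) = ed_move tr tau E (Conf Spl st c m r')"
  by (auto elim!: ed_move.cases intro: ed_move.intros)

lemma fin_play_singleton [simp]: "fin_play tr tau E \<sigma> c0 [c] \<longleftrightarrow> c = c0"
  by (simp add: fin_play_def)

lemma fin_play_snoc:
  "fin_play tr tau E \<sigma> c0 (ps @ [c]) \<longleftrightarrow>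
     (ps = [] \<and> c = c0) \<or>
     (fin_play tr tau E \<sigma> c0 ps \<and> ed_move tr tau E (last ps) c \<and>
      (owner (last ps) = Dup \<longrightarrow> c = \<sigma> ps))"
proof (cases ps rule: rev_cases)
  case (snoc qs d)
  then obtain n where n: "length ps = Suc n" and last: "last ps = ps ! n" by simp
  show ?thesis
    unfolding fin_play_def last using n snoc by (auto simp: nth_append less_Suc_eq)
qed (auto simp: fin_play_def)

lemma fin_play_take:
  "fin_play tr tau E \<sigma> c0 ps \<Longrightarrow> 0 < k \<Longrightarrow> fin_play tr tau E \<sigma> c0 (take k ps)"
  unfolding fin_play_def by (auto simp: min_def)

lemma fin_play_prefix_iff:
  "fin_play tr tau E \<sigma> c0 (map p [0..<Suc n]) \<longleftrightarrow> p 0 = c0 \<and>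
     (\<forall>i<n. ed_move tr tau E (p i) (p (Suc i)) \<and>
        (owner (p i) = Dup \<longrightarrow> p (Suc i) = \<sigma> (map p [0..<Suc i])))"
proof (induction n)
  case 0
  then show ?case by simp
next
  case (Suc n)
  have "map p [0..<Suc (Suc n)] = map p [0..<Suc n] @ [p (Suc n)]" by simp
  moreover have "last (map p [0..<Suc n]) = p n" by simp
  ultimately show ?case
    by (simp only: fin_play_snoc Suc) (auto simp: less_Suc_eq simp del: upt_Suc)
qed

lemma inf_play_iff_prefixes:
  "inf_play tr tau E \<sigma> c0 p \<longleftrightarrow> (\<forall>n. fin_play tr tau E \<sigma> c0 (map p [0..<Suc n]))"
  unfolding inf_play_def fin_play_prefix_iff by blast

lemma fin_play_append:
  assumes "fin_play tr tau E \<sigma> c0 (B @ [c])"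
    and "fin_play tr tau E (\<lambda>ps. \<sigma> (B @ ps)) c ps"
  shows "fin_play tr tau E \<sigma> c0 (B @ ps)"
  using assms(2)
proof (induction ps rule: rev_induct)
  case Nil
  then show ?case by (simp add: fin_play_def)
next
  case (snoc d ps)
  show ?case
  proof (cases "ps = []")
    case True
    with snoc.prems assms(1) show ?thesis by simp
  next
    case False
    with snoc show ?thesis by (simp add: fin_play_snoc flip: append_assoc)
  qed
qed

lemma last_update_head:
  assumes "ps \<noteq> []" "ps ! 0 = c'" "owner c' = owner c" "ed_move tr tau E c' = ed_move tr tau E c"
  shows "owner (last (ps[0 := c])) = owner (last ps)"
    and "ed_move tr tau E (last (ps[0 := c])) = ed_move tr tau E (last ps)"
  using assms by (cases ps; auto simp: last_list_update)+

lemma fin_play_restart: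
  assumes "owner c' = owner c" "ed_move tr tau E c' = ed_move tr tau E c"
    and "fin_play tr tau E (\<lambda>ps. \<tau> (ps[0 := c])) c' ps"
  shows "fin_play tr tau E \<tau> c (ps[0 := c])"
  using assms(3)
proof (induction ps rule: rev_induct)
  case Nil
  then show ?case by (simp add: fin_play_def)
next
  case (snoc d ps)
  show ?case
  proof (cases "ps = []")
    case True
    then show ?thesis by simp
  next
    case False
    then have "ps ! 0 = c'" using snoc.prems by (simp add: fin_play_def nth_append)
    note same = last_update_head[OF False this assms(1,2)]
    from snoc False show ?thesis
      by (simp add: fin_play_snoc list_update_append same)
  qed
qed

lemma inf_play_restart:
  assumes "owner c' = owner c" "ed_move tr tau E c' = ed_move tr tau E c"
    and "inf_play tr tau E (\<lambda>ps. \<tau> (ps[0 := c])) c' p"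
  shows "inf_play tr tau E \<tau> c (p(0 := c))"
proof -
  have "map (p(0 := c)) [0..<Suc n] = (map p [0..<Suc n])[0 := c]" for n
    by (rule nth_equalityI) (auto simp: nth_list_update simp del: upt_Suc)
  then show ?thesis
    using assms fin_play_restart unfolding inf_play_iff_prefixes by metis
qed

lemma inf_play_append:
  assumes "fin_play tr tau E \<sigma> c0 (B @ [c])"
    and "inf_play tr tau E (\<lambda>ps. \<sigma> (B @ ps)) c p"
  shows "inf_play tr tau E \<sigma> c0 (\<lambda>i. if i < length B then B ! i else p (i - length B))"
    (is "inf_play _ _ _ _ _ ?p")
  unfolding inf_play_iff_prefixes
proof
  fix n
  show "fin_play tr tau E \<sigma> c0 (map ?p [0..<Suc n])"
  proof (cases "n < length B")
    case True
    have "map ?p [0..<Suc n] = take (Suc n) (B @ [c])"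
      using True by (intro nth_equalityI) (auto simp: nth_append less_Suc_eq simp del: upt_Suc)
    with fin_play_take[OF assms(1)] show ?thesis by simp
  next
    case False
    have "map ?p [0..<Suc n] = B @ map p [0..<Suc (n - length B)]"
      using False by (intro nth_equalityI) (auto simp: nth_append simp del: upt_Suc)
    moreover have "fin_play tr tau E (\<lambda>ps. \<sigma> (B @ ps)) c (map p [0..<Suc (n - length B)])"
      using assms(2) unfolding inf_play_iff_prefixes by blast
    ultimately show ?thesis using fin_play_append[OF assms(1)] by simp
  qed
qed

lemma dup_wins_residual:
  assumes win: "dup_wins tr tau E \<sigma> c0"
    and reached: "fin_play tr tau E \<sigma> c0 (B @ [c])"
    and same: "owner c' = owner c" "ed_move tr tau E c' = ed_move tr tau E c"
  shows "dup_wins tr tau E (\<lambda>ps. \<sigma> (B @ ps[0 := c])) c'"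
  unfolding dup_wins_def
proof (intro conjI allI impI)
  fix ps
  assume play: "fin_play tr tau E (\<lambda>ps. \<sigma> (B @ ps[0 := c])) c' ps"
    and dup: "owner (last ps) = Dup"
  have ps: "ps \<noteq> []" "ps ! 0 = c'" using play by (auto simp: fin_play_def)
  note same_last = last_update_head[OF ps same]
  have "fin_play tr tau E \<sigma> c0 (B @ ps[0 := c])"
    using fin_play_append[OF reached fin_play_restart[OF same play]] .
  moreover have "last (B @ ps[0 := c]) = last (ps[0 := c])" using ps by simp
  ultimately have "ed_move tr tau E (last (ps[0 := c])) (\<sigma> (B @ ps[0 := c]))"
    using win dup same_last unfolding dup_wins_def by fastforce
  then show "ed_move tr tau E (last ps) (\<sigma> (B @ ps[0 := c]))"
    using same_last by simp
next
  fix p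
  assume "inf_play tr tau E (\<lambda>ps. \<sigma> (B @ ps[0 := c])) c' p"
  then have "inf_play tr tau E \<sigma> c0
      (\<lambda>i. if i < length B then B ! i else (p(0 := c)) (i - length B))" (is "inf_play _ _ _ _ _ ?q")
    using inf_play_append[OF reached inf_play_restart[OF same]] by blast
  then have rewards: "\<exists>\<^sub>\<infinity>i. reward (?q i)"
    using win unfolding dup_wins_def by blast
  show "\<exists>\<^sub>\<infinity>i. reward (p i)"
    unfolding INFM_nat
  proof
    fix m
    obtain n where "n > m + length B" "reward (?q n)"
      using rewards unfolding INFM_nat by blast
    then show "\<exists>n>m. reward (p n)" by (intro exI[of _ "n - length B"]) auto
  qed
qed

lemma ed_equiv_if_reached:
  assumes "dup_wins tr tau E \<sigma> c0"
    and "fin_play tr tau E \<sigma> c0 (B @ [Conf Spl (s, t) None None r])"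
  shows "ed_equiv tr tau E s t"
  unfolding ed_equiv_def
  by (rule exI, rule dup_wins_residual[OF assms]) (simp_all add: ed_move_Spl_reward_irrelevant)

lemma winning_strategy_play_against:
  fixes \<rho> :: "('s, 'a) conf \<Rightarrow> ('s, 'a) conf"
  assumes win: "dup_wins tr tau E \<sigma> c0" and init: "I c0"
    and dup_step: "\<And>c c'. I c \<Longrightarrow> owner c = Dup \<Longrightarrow> ed_move tr tau E c c' \<Longrightarrow> I c'"
    and spl_step: "\<And>c. I c \<Longrightarrow> owner c \<noteq> Dup \<Longrightarrow> ed_move tr tau E c (\<rho> c) \<and> I (\<rho> c)"
  obtains p where "inf_play tr tau E \<sigma> c0 p" "\<And>i. I (p i)"
proof -
  define next_conf where
    "next_conf ps = (if owner (last ps) = Dup then \<sigma> ps else \<rho> (last ps))" for ps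
  define prefix where "prefix n = rec_nat [c0] (\<lambda>_ ps. ps @ [next_conf ps]) n" for n
  define p where "p n = last (prefix n)" for n
  have prefix_0: "prefix 0 = [c0]" by (simp add: prefix_def)
  have prefix_Suc: "prefix (Suc n) = prefix n @ [next_conf (prefix n)]" for n
    by (simp add: prefix_def)
  have last_prefix: "last (prefix n) = p n" for n by (simp add: p_def)
  have prefix_eq: "prefix n = map p [0..<Suc n]" for n
  proof (induction n)
    case (Suc n)
    have "p (Suc n) = next_conf (prefix n)" by (simp add: p_def prefix_Suc)
    with Suc show ?case by (simp add: prefix_Suc)
  qed (simp add: prefix_0 p_def)
  have invariant: "fin_play tr tau E \<sigma> c0 (prefix n) \<and> I (p n)" for n
  proof (induction n)
    case 0
    show ?case using init by (simp add: prefix_0 p_def)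
  next
    case (Suc n)
    have move: "ed_move tr tau E (p n) (next_conf (prefix n)) \<and> I (next_conf (prefix n))"
    proof (cases "owner (p n) = Dup")
      case True
      then have "ed_move tr tau E (p n) (\<sigma> (prefix n))"
        using win Suc.IH last_prefix unfolding dup_wins_def by metis
      with dup_step Suc.IH True show ?thesis by (auto simp: next_conf_def last_prefix)
    next
      case False
      with spl_step Suc.IH show ?thesis by (simp add: next_conf_def last_prefix)
    qed
    have "fin_play tr tau E \<sigma> c0 (prefix n @ [next_conf (prefix n)])"
      using Suc.IH move by (simp add: fin_play_snoc last_prefix next_conf_def)
    moreover have "p (Suc n) = next_conf (prefix n)" by (simp add: p_def prefix_Suc)
    ultimately show ?case using move by (simp add: prefix_Suc)
  qed
  then have "inf_play tr tau E \<sigma> c0 p"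
    unfolding inf_play_iff_prefixes prefix_eq by blast
  with invariant show thesis using that by blast
qed

fun divergence_conf :: "('s \<Rightarrow> 'a \<Rightarrow> 's \<Rightarrow> bool) \<Rightarrow> 'a \<Rightarrow> (nat \<Rightarrow> 's) \<Rightarrow> 's
    \<Rightarrow> ('s, 'a) conf \<Rightarrow> bool" where
  "divergence_conf tr tau ss t (Conf Spl (u, w) None None r) \<longleftrightarrow>
     u \<in> range ss \<and> (\<lambda>x y. tr x tau y)\<^sup>*\<^sup>* t w \<and> (r \<longrightarrow> tau_plus tr tau t w)"
| "divergence_conf tr tau ss t (Conf _ _ (Some (a, u')) (Some (w, _)) r) \<longleftrightarrow>
     a = tau \<and> u' \<in> range ss \<and> (\<lambda>x y. tr x tau y)\<^sup>*\<^sup>* t w \<and> \<not> r"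
| "divergence_conf _ _ _ _ _ \<longleftrightarrow> False"

text \<open>\<open>SOME k. ss k = u\<close> locates \<open>u\<close> on the divergence; if \<open>ss\<close> revisits a state,
  any of its positions will do.\<close>
definition divergence_challenge :: "'a \<Rightarrow> (nat \<Rightarrow> 's) \<Rightarrow> ('s, 'a) conf \<Rightarrow> ('s, 'a) conf" where
  "divergence_challenge tau ss c = (case c of
     Conf _ (u, w) None _ _ \<Rightarrow>
       Conf Dup (u, w) (Some (tau, ss (Suc (SOME k. ss k = u)))) (Some (w, Frown)) False
   | Conf _ uw (Some x) m _ \<Rightarrow> Conf Dup uw (Some x) m False)"

lemma divergence_conf_Dup_step:
  assumes "divergence_conf tr tau ss t c" "owner c = Dup" "ed_move tr tau E c c'"
  shows "divergence_conf tr tau ss t c'"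
  using assms(3,1,2)
  by (cases rule: ed_move.cases)
     (auto simp: tau_plus_def intro: rtranclp.rtrancl_into_rtrancl rtranclp_into_tranclp1)

lemma divergence_challenge_step:
  assumes inv: "divergence_conf tr tau ss t c" and spl: "owner c \<noteq> Dup"
    and div: "\<forall>i. tr (ss i) tau (ss (Suc i))"
  shows "ed_move tr tau E c (divergence_challenge tau ss c)
    \<and> divergence_conf tr tau ss t (divergence_challenge tau ss c)"
proof (cases c)
  case (Conf p uw ch m r)
  obtain u w where uw: "uw = (u, w)" by fastforce
  have p: "p = Spl" using spl Conf by (cases p) auto
  show ?thesis
  proof (cases ch)
    case None
    with inv Conf uw p have m: "m = None" and u: "u \<in> range ss"
      and w: "(\<lambda>x y. tr x tau y)\<^sup>*\<^sup>* t w"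
      by (cases m; simp)+
    from u obtain k where "ss k = u" by blast
    then have "ss (SOME k. ss k = u) = u" by (rule someI)
    with div have "tr u tau (ss (Suc (SOME k. ss k = u)))" by (metis (no_types))
    moreover have "divergence_challenge tau ss c =
        Conf Dup (u, w) (Some (tau, ss (Suc (SOME k. ss k = u)))) (Some (w, Frown)) False"
      using Conf uw None by (simp add: divergence_challenge_def)
    ultimately show ?thesis
      using Conf uw p None m w by (auto intro: ed_move.S2a)
  next
    case (Some x)
    with inv Conf uw p obtain a u' w' f where "x = (a, u')" "m = Some (w', f)"
      by (cases x; cases m) auto
    moreover have "divergence_challenge tau ss c = Conf Dup (u, w) ch m False"
      using Conf uw Some by (simp add: divergence_challenge_def)
    ultimately show ?thesis
      using inv Conf uw p Some by (auto intro: ed_move.S1)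
  qed
qed

lemma divergence_conf_reward:
  assumes "divergence_conf tr tau ss t c" "reward c"
  obtains k w where "c = Conf Spl (ss k, w) None None True" "tau_plus tr tau t w"
proof (cases c)
  case (Conf p uw ch m r)
  then show ?thesis
    using assms that by (cases uw; cases p; cases ch; cases m) auto
qed

lemma divergence_matched:
  assumes win: "dup_wins tr tau E \<sigma> (Conf Spl (ss 0, t) None None False)"
    and div: "\<forall>i. tr (ss i) tau (ss (Suc i))"
  shows "\<exists>t' k. tau_plus tr tau t t' \<and> ed_equiv tr tau E (ss k) t'"
proof -
  let ?c0 = "Conf Spl (ss 0, t) None None False"
  have init: "divergence_conf tr tau ss t ?c0" by simp
  have dup_step: "\<And>c c'. divergence_conf tr tau ss t c \<Longrightarrow> owner c = Dup \<Longrightarrow>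
      ed_move tr tau E c c' \<Longrightarrow> divergence_conf tr tau ss t c'"
    by (rule divergence_conf_Dup_step)
  have spl_step: "\<And>c. divergence_conf tr tau ss t c \<Longrightarrow> owner c \<noteq> Dup \<Longrightarrow>
      ed_move tr tau E c (divergence_challenge tau ss c)
      \<and> divergence_conf tr tau ss t (divergence_challenge tau ss c)"
    using divergence_challenge_step[where tr = tr and tau = tau and ss = ss, OF _ _ div] by blast
  obtain p where play: "inf_play tr tau E \<sigma> ?c0 p"
    and inv: "\<And>i. divergence_conf tr tau ss t (p i)"
    by (rule winning_strategy_play_against[where I = "divergence_conf tr tau ss t", OF win init])
      (use dup_step spl_step in blast)+
  have "\<exists>\<^sub>\<infinity>i. reward (p i)" using win play unfolding dup_wins_def by blast
  then obtain i where "reward (p i)" by (blast dest: INFM_EX)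
  then obtain k w where p_i: "p i = Conf Spl (ss k, w) None None True"
    and tw: "tau_plus tr tau t w"
    by (rule divergence_conf_reward[OF inv])
  have "fin_play tr tau E \<sigma> ?c0 (map p [0..<Suc i])"
    using play unfolding inf_play_iff_prefixes by blast
  then have "fin_play tr tau E \<sigma> ?c0 (map p [0..<i] @ [Conf Spl (ss k, w) None None True])"
    by (simp add: p_i)
  with tw show ?thesis using ed_equiv_if_reached[OF win] by blast
qed

theorem lemma6p9:
  fixes tr :: "'s \<Rightarrow> 'a \<Rightarrow> 's \<Rightarrow> bool" and tau :: 'a
    and x y :: ob and s t :: 's and ss :: "nat \<Rightarrow> 's"
  assumes "ed_equiv tr tau (Eset x y) s t"
    and "ss 0 = s"
    and "\<forall>i. tr (ss i) tau (ss (Suc i))"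
  shows "\<exists>t' k. tau_plus tr tau t t' \<and> ed_equiv tr tau (Eset x y) (ss k) t'"
proof -
  obtain \<sigma> where "dup_wins tr tau (Eset x y) \<sigma> (Conf Spl (ss 0, t) None None False)"
    using assms(1,2) unfolding ed_equiv_def by blast
  then show ?thesis using assms(3) by (rule divergence_matched)
qed

end
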